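(* For every input word $u\in\{0,1,2\}^*$, the Berstel adder $\mathcal{B}$ outputs a binary word $\mathcal{B}(u)\cdot\mathcal{B}_{\downarrow}(u)\in\{0,1\}^*$ with \[ \mathrm{val}_{\mathcal{F}}(u)=\mathrm{val}_{\mathcal{F}}\big(\mathcal{B}(u)\cdot\mathcal{B}_{\downarrow}(u)\big). \]
   Context: Fibonacci numbers: $F_0=1$, $F_1=2$, $F_n=F_{n-1}+F_{n-2}$ for $n\ge2$. For a word $w=w_{k-1}\cdots w_0$ over $\{0,1,2\}$ (digits indexed from the right), $\mathrm{val}_{\mathcal{F}}(w)=\sum_{i=0}^{k-1}w_iF_i$, with $\mathrm{val}_{\mathcal F}(\varepsilon)=0$. A Mealy machine reads an input word from left to right starting in its initial state; each transition $p\xrightarrow{a/b}q$ reads letter $a$, outputs letter $b$ and moves to $q$. $M(u)$ is the concatenation of outputs, and $M_{\downarrow}(u)$ the extra output word of the state reached after reading $u$. The Berstel adder $\mathcal{B}$ has 10 states $000.0,\ 001.1,\ 001.2,\ 010.3,\ 010.4,\ 100.5,\ 100.6,\ 101.6,\ 101.7,\ 000.1$, initial state $000.0$, transitions: $000.0$: $0/0\to000.0$, $1/0\to001.2$, $2/0\to010.4$; $001.2$: $0/0\to010.3$, $1/0\to100.5$, $2/0\to101.7$; $010.4$: $0/0\to101.6$, $1/1\to000.0$, $2/1\to001.2$; $010.3$: $0/0\to100.5$, $1/0\to101.7$, $2/1\to000.1$; $100.5$: $0/1\to000.0$, $1/1\to001.2$, $2/1\to010.4$; $101.7$: $0/1\to010.3$,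 $1/1\to100.5$, $2/1\to101.7$; $101.6$: $0/1\to001.2$, $1/1\to010.4$, $2/1\to100.6$; $000.1$: $0/0\to001.1$, $1/0\to010.3$, $2/0\to100.5$; $100.6$: $0/1\to001.1$, $1/1\to010.3$, $2/1\to100.5$; $001.1$: $0/0\to001.2$, $1/0\to010.4$, $2/0\to100.6$. The extra output word of a state $xyz.j$ is $xyz$. *)

theory Defs
  imports Main
begin

fun F :: "nat \<Rightarrow> nat" where
  "F 0 = 1"
| "F (Suc 0) = 2"
| "F (Suc (Suc n)) = F (Suc n) + F n"

text \<open>Words are lists of digits written left to right, i.e. the list
  [w_(k-1), ..., w_0]; the last list element has index 0.\<close>
definition valF :: "nat list \<Rightarrow> nat" where
  "valF w = (\<Sum>i<length w. w ! (length w - 1 - i) * F i)"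

text \<open>States of the Berstel adder; S_xyz_j stands for state xyz.j.\<close>
datatype bstate = S000_0 | S001_1 | S001_2 | S010_3 | S010_4
  | S100_5 | S100_6 | S101_6 | S101_7 | S000_1

fun btrans :: "bstate \<Rightarrow> nat \<Rightarrow> nat \<times> bstate" where
  "btrans S000_0 a = (if a = 0 then (0, S000_0) else if a = 1 then (0, S001_2) else (0, S010_4))"
| "btrans S001_2 a = (if a = 0 then (0, S010_3) else if a = 1 then (0, S100_5) else (0, S101_7))"
| "btrans S010_4 a = (if a = 0 then (0, S101_6) else if a = 1 then (1, S000_0) else (1, S001_2))"
| "btrans S010_3 a = (if a = 0 then (0, S100_5) else if a = 1 then (0, S101_7) else (1, S000_1))"
| "btrans S100_5 a = (if a = 0 then (1, S000_0) else if a = 1 then (1, S001_2) else (1, S010_4))"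
| "btrans S101_7 a = (if a = 0 then (1, S010_3) else if a = 1 then (1, S100_5) else (1, S101_7))"
| "btrans S101_6 a = (if a = 0 then (1, S001_2) else if a = 1 then (1, S010_4) else (1, S100_6))"
| "btrans S000_1 a = (if a = 0 then (0, S001_1) else if a = 1 then (0, S010_3) else (0, S100_5))"
| "btrans S100_6 a = (if a = 0 then (1, S001_1) else if a = 1 then (1, S010_3) else (1, S100_5))"
| "btrans S001_1 a = (if a = 0 then (0, S001_2) else if a = 1 then (0, S010_4) else (0, S100_6))"

fun bfinal :: "bstate \<Rightarrow> nat list" where
  "bfinal S000_0 = [0,0,0]"
| "bfinal S001_1 = [0,0,1]"
| "bfinal S001_2 = [0,0,1]"
| "bfinal S010_3 = [0,1,0]"
| "bfinal S010_4 = [0,1,0]"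
| "bfinal S100_5 = [1,0,0]"
| "bfinal S100_6 = [1,0,0]"
| "bfinal S101_6 = [1,0,1]"
| "bfinal S101_7 = [1,0,1]"
| "bfinal S000_1 = [0,0,0]"

fun brun :: "bstate \<Rightarrow> nat list \<Rightarrow> nat list \<times> bstate" where
  "brun q [] = ([], q)"
| "brun q (a # u) = (let (b, q') = btrans q a; (v, r) = brun q' u in (b # v, r))"

definition B_out :: "nat list \<Rightarrow> nat list" where
  "B_out u = fst (brun S000_0 u)"

definition B_final :: "nat list \<Rightarrow> nat list" where
  "B_final u = bfinal (snd (brun S000_0 u))"

end

theory Submission
  imports Defs "HOL-Library.Product_Plus"
begin

text \<open>Relative to any sequence G obeying the Fibonacci recurrence, the value of a word is
  A * G 0 + B * G 1 for integer coordinates (A, B), and appending a digit a maps (A, B) to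
  (B + a, A + B). The output of the Berstel adder lags three digits behind its input, and each
  state r stores, as a coordinate pair carry r, the part of the input value not yet accounted
  for by the output. So the coordinates of the input are those of the output followed by 000
  plus the carry, which is a local check on each transition; finally, the extra word of the
  reached state has the same Fibonacci value as its carry.\<close>

fun digit_sum :: "(nat \<Rightarrow> int) \<Rightarrow> nat list \<Rightarrow> int" where
  "digit_sum G [] = 0"
| "digit_sum G (a # w) = int a * G (length w) + digit_sum G w"

lemma valF_eq_digit_sum: "int (valF w) = digit_sum (\<lambda>i. int (F i)) w"
proof (induction w)
  case Nil
  then show ?case by (simp add: valF_def)
next
  case (Cons a w)
  have "valF (a # w) = a * F (length w) + valF w"
    unfolding valF_def by (simp add: lessThan_Suc Suc_diff_le nth_Cons' add.commute)
  then show ?case using Cons by simp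
qed

lemma digit_sum_snoc: "digit_sum G (w @ [a]) = int a * G 0 + digit_sum (\<lambda>i. G (Suc i)) w"
  by (induction w) auto

definition fib_shift :: "int \<times> int \<Rightarrow> int \<times> int" where
  "fib_shift p = (snd p, fst p + snd p)"

definition digit_step :: "int \<times> int \<Rightarrow> nat \<Rightarrow> int \<times> int" where
  "digit_step p a = fib_shift p + (int a, 0)"

definition fib_coords :: "nat list \<Rightarrow> int \<times> int" where
  "fib_coords w = foldl digit_step 0 w"

definition fib_value :: "int \<times> int \<Rightarrow> int" where
  "fib_value p = fst p + 2 * snd p"

lemma fib_shift_add: "fib_shift (p + q) = fib_shift p + fib_shift q"
  by (simp add: fib_shift_def)

lemma fib_shift_iterate_zero: "(fib_shift ^^ n) 0 = 0"
  by (induction n) (simp_all add: fib_shift_def zero_prod_def)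

lemma digit_step_add: "digit_step (p + q) a = fib_shift p + digit_step q a"
  by (simp add: digit_step_def fib_shift_add)

lemma fib_coords_snoc: "fib_coords (w @ [a]) = digit_step (fib_coords w) a"
  by (simp add: fib_coords_def)

lemma fib_coords_zeros: "fib_coords [0, 0, 0] = 0"
  by (simp add: fib_coords_def digit_step_def fib_shift_def zero_prod_def)

lemma fib_coords_append:
  "fib_coords (w @ xs) = (fib_shift ^^ length xs) (fib_coords w) + fib_coords xs"
proof (induction xs rule: rev_induct)
  case Nil
  then show ?case by (simp add: fib_coords_def)
next
  case (snoc a xs)
  then show ?case
    by (simp add: fib_coords_snoc flip: append_assoc)
       (simp add: digit_step_add)
qed

lemma digit_sum_fib_coords:
  assumes "\<And>n. G (Suc (Suc n)) = G (Suc n) + G n"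
  shows "digit_sum G w = fst (fib_coords w) * G 0 + snd (fib_coords w) * G 1"
  using assms
proof (induction w arbitrary: G rule: rev_induct)
  case Nil
  then show ?case by (simp add: fib_coords_def)
next
  case (snoc a w)
  have "digit_sum (\<lambda>i. G (Suc i)) w = fst (fib_coords w) * G 1 + snd (fib_coords w) * G 2"
    using snoc.IH[of "\<lambda>i. G (Suc i)"] snoc.prems by (simp add: numeral_2_eq_2)
  moreover have "G 2 = G 1 + G 0"
    using snoc.prems[of 0] by (simp add: numeral_2_eq_2)
  ultimately show ?case
    by (simp add: digit_sum_snoc fib_coords_snoc digit_step_def fib_shift_def algebra_simps)
qed

lemma valF_eq_fib_value: "int (valF w) = fib_value (fib_coords w)"
  by (simp add: valF_eq_digit_sum digit_sum_fib_coords fib_value_def)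

lemma brun_snoc:
  "brun q (u @ [a]) = (let (v, r) = brun q u; (b, r') = btrans r a in (v @ [b], r'))"
  by (induction u arbitrary: q) (auto simp: split_beta)

fun carry :: "bstate \<Rightarrow> int \<times> int" where
  "carry S000_0 = 0"
| "carry S001_2 = (1, 0)"
| "carry S010_4 = (2, 0)"
| "carry S010_3 = (0, 1)"
| "carry S100_5 = (1, 1)"
| "carry S101_7 = (2, 1)"
| "carry S101_6 = (0, 2)"
| "carry S000_1 = (2, -1)"
| "carry S100_6 = (3, 0)"
| "carry S001_1 = (-1, 1)"

lemma btrans_carry:
  assumes "a \<in> {0, 1, 2}" and "btrans r a = (b, r')"
  shows "b \<in> {0, 1} \<and> digit_step (carry r) a = carry r' + fib_coords [b, 0, 0, 0]"
  using assms
  by (cases r) (auto simp: fib_coords_def digit_step_def fib_shift_def)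

lemma length_bfinal: "length (bfinal r) = 3"
  by (cases r) simp_all

lemma bfinal_carry:
  "set (bfinal r) \<subseteq> {0, 1} \<and> fib_value (fib_coords (bfinal r)) = fib_value (carry r)"
  by (cases r) (simp_all add: fib_coords_def digit_step_def fib_shift_def fib_value_def)

lemma brun_carry:
  assumes "set u \<subseteq> {0, 1, 2}" and "brun S000_0 u = (v, r)"
  shows "set v \<subseteq> {0, 1} \<and> fib_coords u = (fib_shift ^^ 3) (fib_coords v) + carry r"
  using assms
proof (induction u arbitrary: v r rule: rev_induct)
  case Nil
  then show ?case by (simp add: fib_coords_def fib_shift_iterate_zero)
next
  case (snoc a u)
  obtain v0 r0 where run: "brun S000_0 u = (v0, r0)" by fastforce
  obtain b where step: "btrans r0 a = (b, r)" and v: "v = v0 @ [b]"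
    using snoc.prems(2) by (auto simp: brun_snoc run split: prod.splits)
  have IH: "set v0 \<subseteq> {0, 1}" "fib_coords u = (fib_shift ^^ 3) (fib_coords v0) + carry r0"
    using snoc.IH[OF _ run] snoc.prems(1) by auto
  have b: "b \<in> {0, 1}"
    and carry_step: "digit_step (carry r0) a = carry r + fib_coords [b, 0, 0, 0]"
    using btrans_carry[OF _ step] snoc.prems(1) by auto
  have "fib_coords (u @ [a]) = (fib_shift ^^ 4) (fib_coords v0) + digit_step (carry r0) a"
    by (simp add: fib_coords_snoc IH(2) digit_step_add numeral_eq_Suc)
  also have "\<dots> = fib_coords (v0 @ [b, 0, 0, 0]) + carry r"
    by (simp add: carry_step fib_coords_append numeral_eq_Suc)
  also have "\<dots> = (fib_shift ^^ 3) (fib_coords v) + carry r"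
    using fib_coords_append[of "v0 @ [b]" "[0, 0, 0]"] fib_coords_zeros
    by (simp add: v numeral_eq_Suc)
  finally show ?case using IH(1) b v by auto
qed

theorem theorem2:
  fixes u :: "nat list"
  assumes "set u \<subseteq> {0, 1, 2}"
  shows "set (B_out u @ B_final u) \<subseteq> {0, 1} \<and> valF u = valF (B_out u @ B_final u)"
proof -
  obtain v r where run: "brun S000_0 u = (v, r)" by fastforce
  have v: "set v \<subseteq> {0, 1}"
    and coords: "fib_coords u = (fib_shift ^^ 3) (fib_coords v) + carry r"
    using brun_carry[OF assms run] by auto
  have "int (valF u) = fib_value ((fib_shift ^^ 3) (fib_coords v)) + fib_value (carry r)"
    by (simp add: valF_eq_fib_value coords fib_value_def)
  also have "\<dots> = int (valF (v @ bfinal r))"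
    using bfinal_carry[of r]
    by (simp add: valF_eq_fib_value fib_coords_append length_bfinal fib_value_def)
  finally show ?thesis
    using v bfinal_carry[of r] run by (simp add: B_out_def B_final_def)
qed

end
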